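(* Fix any $\delta>0$ and let $\zeta(r,n)=n^{-\delta}$. Then there is no infinite family of metafunnels that is up-to-$\zeta$ fixating.
   Context: Moran process: given a directed graph $G$ and fitness $r>1$, one vertex (the initial mutant) is a mutant, the rest non-mutants. At each step a vertex $v$ is chosen with probability proportional to fitness (mutants $r$, non-mutants $1$), an out-neighbour $w$ of $v$ is chosen uniformly at random and the state of $v$ is copied to $w$. Extinction: eventually no mutants. An infinite family $\Upsilon$ of directed graphs is up-to-$\zeta$ fixating if for every $r>1$ there is $n_0$ such that for every $G\in\Upsilon$ with $n\ge n_0$ vertices, the extinction probability of the Moran process with fitness $r$ on $G$ from a uniformly random initial mutant is at most $\zeta(r,n)$. For positive integers $k,\ell,m$, the $(k,\ell,m)$-metafunnel has vertex set $V_0\cup V_1\cup\dots\cup V_k$ (disjoint), where $V_0=\{v^*\}$ and for $i\in[k]$, $V_i$ is the disjoint union of sets $V_{i,1},\dots,V_{i,\ell}$ each of size $m^i$; its edge set is $(V_0\times V_k)\cup(V_1\times V_0)\cup\bigcup_{i\in[k-1]}\bigcup_{j\in[\ell]}(V_{i+1,j}\times V_{i,j})$. An infinite family of metafunnels is an infinite set of such graphs. *)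

theory Defs
  imports Complex_Main
begin

text \<open>Directed graphs are pairs (V, E) with a finite vertex set V and edge set E \<subseteq> V \<times> V.
  A state of the Moran process is the set S of mutant vertices.\<close>

definition out_nbrs :: "('v \<times> 'v) set \<Rightarrow> 'v \<Rightarrow> 'v set" where
  "out_nbrs E v = {w. (v, w) \<in> E}"

definition fitness :: "real \<Rightarrow> 'v set \<Rightarrow> 'v \<Rightarrow> real" where
  "fitness r S v = (if v \<in> S then r else 1)"

definition total_fitness :: "'v set \<Rightarrow> real \<Rightarrow> 'v set \<Rightarrow> real" where
  "total_fitness V r S = r * real (card S) + real (card (V - S))"

text \<open>Vertex v reproduces onto out-neighbour w: the state of v is copied to w.\<close>
definition moran_step :: "'v set \<Rightarrow> 'v \<Rightarrow> 'v \<Rightarrow> 'v set" where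
  "moran_step S v w = (if v \<in> S then insert w S else S - {w})"

text \<open>Probability that the process started in state S has reached the all-non-mutant
  state within t steps. (A vertex without out-neighbours does nothing when chosen.)\<close>
fun ext_within :: "'v set \<Rightarrow> ('v \<times> 'v) set \<Rightarrow> real \<Rightarrow> nat \<Rightarrow> 'v set \<Rightarrow> real" where
  "ext_within V E r 0 S = (if S = {} then 1 else 0)"
| "ext_within V E r (Suc t) S =
     (if S = {} then 1 else
       (\<Sum>v\<in>V. fitness r S v / total_fitness V r S *
          (if out_nbrs E v = {} then ext_within V E r t S
           else (\<Sum>w\<in>out_nbrs E v. ext_within V E r t (moran_step S v w))
                  / real (card (out_nbrs E v)))))"

definition extinction_prob :: "'v set \<Rightarrow> ('v \<times> 'v) set \<Rightarrow> real \<Rightarrow> 'v set \<Rightarrow> real" where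
  "extinction_prob V E r S = (SUP t. ext_within V E r t S)"

definition avg_extinction_prob :: "'v set \<Rightarrow> ('v \<times> 'v) set \<Rightarrow> real \<Rightarrow> real" where
  "avg_extinction_prob V E r = (\<Sum>v\<in>V. extinction_prob V E r {v}) / real (card V)"

definition up_to_fixating ::
    "(real \<Rightarrow> nat \<Rightarrow> real) \<Rightarrow> ('v set \<times> ('v \<times> 'v) set) set \<Rightarrow> bool" where
  "up_to_fixating \<zeta> \<Upsilon> \<longleftrightarrow> infinite \<Upsilon> \<and>
     (\<forall>r>1. \<exists>n0. \<forall>G\<in>\<Upsilon>. card (fst G) \<ge> n0 \<longrightarrow>
        avg_extinction_prob (fst G) (snd G) r \<le> \<zeta> r (card (fst G)))"

text \<open>The (k,l,m)-metafunnel. Vertex (0,0,0) is v*; vertex (i,j,x) with 1\<le>i\<le>k, 1\<le>j\<le>l,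
  x < m^i belongs to V_{i,j}.\<close>
definition metafunnel_V :: "nat \<Rightarrow> nat \<Rightarrow> nat \<Rightarrow> (nat \<times> nat \<times> nat) set" where
  "metafunnel_V k l m = {(0,0,0)} \<union>
     {(i,j,x). 1 \<le> i \<and> i \<le> k \<and> 1 \<le> j \<and> j \<le> l \<and> x < m ^ i}"

definition metafunnel_E :: "nat \<Rightarrow> nat \<Rightarrow> nat \<Rightarrow> ((nat \<times> nat \<times> nat) \<times> (nat \<times> nat \<times> nat)) set" where
  "metafunnel_E k l m =
     {((0,0,0), (i,j,x)) | i j x. (i,j,x) \<in> metafunnel_V k l m \<and> i = k \<and> k \<ge> 1}
   \<union> {((i,j,x), (0,0,0)) | i j x. (i,j,x) \<in> metafunnel_V k l m \<and> i = 1}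
   \<union> {((i',j,x), (i,j,y)) | i' i j x y. (i',j,x) \<in> metafunnel_V k l m \<and>
        (i,j,y) \<in> metafunnel_V k l m \<and> 1 \<le> i \<and> i < k \<and> i' = i + 1}"

definition metafunnel :: "nat \<Rightarrow> nat \<Rightarrow> nat \<Rightarrow>
    (nat \<times> nat \<times> nat) set \<times> ((nat \<times> nat \<times> nat) \<times> (nat \<times> nat \<times> nat)) set" where
  "metafunnel k l m = (metafunnel_V k l m, metafunnel_E k l m)"

end

theory Submission
  imports Defs
begin

text \<open>Extinction from S has probability at least f S for every f \<le> 1 that strictly increases in
  expectation over one Moran step wherever it is positive: the probability of extinction within
  t steps then stays above f S - \<lambda>^t for some \<lambda> < 1. We use
  f S = (\<Prod>x\<in>S. 1 / (1 + c x)) - \<eta> for vertex weights c, whose drift is an explicit sum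
  over edges. On a metafunnel with fitness 2, suitable weights show that a mutant started outside
  the top layer V_k dies with probability at least 3/16, and one started in V_k with probability
  at least 1 / (2 (1 + 4^(k+1))) provided the layers are large (k = 1 or m \<ge> 8). If k = 1 or
  m is large, V_k holds at least half of the n vertices and 4^k \<le> n^(\<delta>/2); otherwise m is
  bounded and a fraction at least 1/(m+1) of the vertices lies outside V_k. Either way the average
  extinction probability exceeds n^(-\<delta>) once n is large, and an infinite family of
  metafunnels contains arbitrarily large ones.\<close>

section \<open>Extinction lower bounds from subharmonic functions\<close>

definition moran_expectation ::
    "'v set \<Rightarrow> ('v \<times> 'v) set \<Rightarrow> real \<Rightarrow> ('v set \<Rightarrow> real) \<Rightarrow> 'v set \<Rightarrow> real" where
  "moran_expectation V E r h S = (\<Sum>v\<in>V. fitness r S v / total_fitness V r S *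
     (if out_nbrs E v = {} then h S
      else (\<Sum>w\<in>out_nbrs E v. h (moran_step S v w)) / real (card (out_nbrs E v))))"

lemma ext_within_Suc_eq:
  "ext_within V E r (Suc t) S =
     (if S = {} then 1 else moran_expectation V E r (ext_within V E r t) S)"
  by (simp add: moran_expectation_def)

declare ext_within.simps(2) [simp del]

lemma prod_le_prod_subset:
  fixes f :: "'a \<Rightarrow> real"
  assumes "finite S" "B \<subseteq> S" "\<forall>x\<in>S. 0 \<le> f x \<and> f x \<le> 1"
  shows "prod f S \<le> prod f B"
proof -
  have "prod f S = prod f (S - B) * prod f B" using prod.subset_diff[OF assms(2,1)] by simp
  moreover have "prod f (S - B) \<le> 1" "prod f (S - B) \<ge> 0" "prod f B \<ge> 0"
    using assms by (auto intro!: prod_le_1 prod_nonneg)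
  ultimately show ?thesis using mult_left_le_one_le by metis
qed

locale moran_graph =
  fixes V :: "'v set" and E :: "('v \<times> 'v) set" and r :: real
  assumes finite_V: "finite V" and E_subset: "E \<subseteq> V \<times> V" and r_pos: "r > 0"
begin

lemma out_nbrs_subset: "out_nbrs E v \<subseteq> V"
  using E_subset by (auto simp: out_nbrs_def)

lemma finite_out_nbrs: "finite (out_nbrs E v)"
  using out_nbrs_subset finite_V finite_subset by blast

lemma moran_step_subset: "S \<subseteq> V \<Longrightarrow> w \<in> out_nbrs E v \<Longrightarrow> moran_step S v w \<subseteq> V"
  using out_nbrs_subset by (auto simp: moran_step_def)

lemma total_fitness_pos:
  assumes "S \<subseteq> V" "S \<noteq> {}"
  shows "total_fitness V r S > 0"
proof -
  have "card S > 0" using assms finite_V finite_subset card_gt_0_iff by blast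
  then show ?thesis using r_pos unfolding total_fitness_def by (simp add: add_pos_nonneg)
qed

lemma sum_fitness: "S \<subseteq> V \<Longrightarrow> (\<Sum>v\<in>V. fitness r S v) = total_fitness V r S"
  using finite_V by (simp add: fitness_def sum.If_cases total_fitness_def Int_absorb1 Diff_eq
      mult.commute)

lemma sum_selection_prob:
  assumes "S \<subseteq> V" "S \<noteq> {}"
  shows "(\<Sum>v\<in>V. fitness r S v / total_fitness V r S) = 1"
  using sum_fitness[OF assms(1)] total_fitness_pos[OF assms]
  by (simp add: sum_divide_distrib[symmetric])

lemma selection_prob_nonneg:
  "S \<subseteq> V \<Longrightarrow> S \<noteq> {} \<Longrightarrow> fitness r S v / total_fitness V r S \<ge> 0"
  using total_fitness_pos[of S] r_pos by (auto simp: fitness_def)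

lemma moran_expectation_add_const:
  assumes S: "S \<subseteq> V" "S \<noteq> {}"
  shows "moran_expectation V E r (\<lambda>T. h T + c) S = moran_expectation V E r h S + c"
proof -
  have inner: "(if out_nbrs E v = {} then h S + c
      else (\<Sum>w\<in>out_nbrs E v. h (moran_step S v w) + c) / real (card (out_nbrs E v)))
    = (if out_nbrs E v = {} then h S
      else (\<Sum>w\<in>out_nbrs E v. h (moran_step S v w)) / real (card (out_nbrs E v))) + c" for v
    using finite_out_nbrs[of v]
    by (cases "out_nbrs E v = {}") (simp_all add: sum.distrib add_divide_distrib)
  have "moran_expectation V E r (\<lambda>T. h T + c) S
      = moran_expectation V E r h S + c * (\<Sum>v\<in>V. fitness r S v / total_fitness V r S)"
    unfolding moran_expectation_def inner
    by (simp add: distrib_left sum.distrib sum_distrib_left mult.commute)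
  then show ?thesis using sum_selection_prob[OF S] by simp
qed

lemma moran_expectation_mono:
  assumes S: "S \<subseteq> V" "S \<noteq> {}" and le: "\<And>T. T \<subseteq> V \<Longrightarrow> h1 T \<le> h2 T"
  shows "moran_expectation V E r h1 S \<le> moran_expectation V E r h2 S"
  unfolding moran_expectation_def
proof (intro sum_mono mult_left_mono)
  fix v
  show "(if out_nbrs E v = {} then h1 S
          else (\<Sum>w\<in>out_nbrs E v. h1 (moran_step S v w)) / real (card (out_nbrs E v)))
      \<le> (if out_nbrs E v = {} then h2 S
          else (\<Sum>w\<in>out_nbrs E v. h2 (moran_step S v w)) / real (card (out_nbrs E v)))"
    using le S moran_step_subset by (auto intro!: divide_right_mono sum_mono)
  show "0 \<le> fitness r S v / total_fitness V r S" using selection_prob_nonneg S by blast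
qed

lemma moran_expectation_const:
  assumes "S \<subseteq> V" "S \<noteq> {}"
  shows "moran_expectation V E r (\<lambda>T. c) S = c"
proof -
  have "moran_expectation V E r (\<lambda>T. 0) S = 0"
    unfolding moran_expectation_def by (intro sum.neutral) simp
  then show ?thesis using moran_expectation_add_const[OF assms, of "\<lambda>T. 0" c] by simp
qed

lemma ext_within_bounds: "S \<subseteq> V \<Longrightarrow> 0 \<le> ext_within V E r t S \<and> ext_within V E r t S \<le> 1"
proof (induction t arbitrary: S)
  case (Suc t)
  show ?case
  proof (cases "S = {}")
    case False
    have "moran_expectation V E r (\<lambda>T. 0) S \<le> moran_expectation V E r (ext_within V E r t) S"
      "moran_expectation V E r (ext_within V E r t) S \<le> moran_expectation V E r (\<lambda>T. 1) S"
      using Suc False by (auto intro!: moran_expectation_mono)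
    then show ?thesis
      using moran_expectation_const[OF Suc.prems False] False by (simp add: ext_within_Suc_eq)
  qed (simp add: ext_within_Suc_eq)
qed simp

lemma ext_within_le_extinction_prob:
  assumes "S \<subseteq> V"
  shows "ext_within V E r t S \<le> extinction_prob V E r S"
proof -
  have "bdd_above (range (\<lambda>t. ext_within V E r t S))"
    using ext_within_bounds[OF assms] by (auto intro!: bdd_aboveI[of _ 1])
  then show ?thesis unfolding extinction_prob_def by (rule cSUP_upper[OF UNIV_I])
qed

lemma extinction_prob_nonneg: "S \<subseteq> V \<Longrightarrow> extinction_prob V E r S \<ge> 0"
  using ext_within_le_extinction_prob ext_within_bounds by (meson order_trans)

lemma ext_within_ge_geometric:
  assumes f_le_1: "\<And>S. S \<subseteq> V \<Longrightarrow> f S \<le> 1"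
    and drift: "\<And>S. S \<subseteq> V \<Longrightarrow> S \<noteq> {} \<Longrightarrow> f S > 0 \<Longrightarrow>
                  moran_expectation V E r f S \<ge> f S + (1 - q)"
    and q: "0 \<le> q" "q \<le> 1" and S: "S \<subseteq> V"
  shows "ext_within V E r t S \<ge> f S - q ^ t"
  using S
proof (induction t arbitrary: S)
  case 0
  then show ?case using f_le_1[OF 0] by (cases "S = {}") auto
next
  case (Suc t)
  have pow: "0 \<le> q ^ Suc t" "q ^ t \<le> 1" using q by (auto simp: power_le_one)
  consider "S = {}" | "S \<noteq> {}" "f S > 0" | "f S \<le> 0" by linarith
  then show ?case
  proof cases
    case 1
    then show ?thesis using f_le_1[OF Suc.prems] pow by (simp add: ext_within_Suc_eq)
  next
    case 2
    have "moran_expectation V E r f S - q ^ t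
        = moran_expectation V E r (\<lambda>T. f T + - (q ^ t)) S"
      using moran_expectation_add_const[OF Suc.prems 2(1), of f "- (q ^ t)"] by simp
    also have "\<dots> \<le> ext_within V E r (Suc t) S"
      using Suc 2 by (auto intro!: moran_expectation_mono simp: ext_within_Suc_eq)
    finally have "f S + (1 - q) - q ^ t \<le> ext_within V E r (Suc t) S"
      using drift[OF Suc.prems 2] by linarith
    moreover have "q ^ t * (1 - q) \<le> 1 - q" using pow q by (simp add: mult_left_le_one_le)
    ultimately show ?thesis by (simp add: algebra_simps)
  next
    case 3
    then show ?thesis using ext_within_bounds[OF Suc.prems, of "Suc t"] pow by linarith
  qed
qed

lemma extinction_prob_ge_subharmonic:
  assumes f_le_1: "\<And>S. S \<subseteq> V \<Longrightarrow> f S \<le> 1"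
    and strict: "\<And>S. S \<subseteq> V \<Longrightarrow> S \<noteq> {} \<Longrightarrow> f S > 0 \<Longrightarrow> moran_expectation V E r f S > f S"
    and S0: "S0 \<subseteq> V"
  shows "extinction_prob V E r S0 \<ge> f S0"
proof -
  define A where "A = {S. S \<subseteq> V \<and> S \<noteq> {} \<and> f S > 0}"
  have "finite A" unfolding A_def using finite_V by (simp add: finite_subset[of _ "Pow V"] subset_eq)
  define \<mu> where
    "\<mu> = (if A = {} then 1 else Min ((\<lambda>S. moran_expectation V E r f S - f S) ` A))"
  have \<mu>: "\<mu> > 0" "\<And>S. S \<in> A \<Longrightarrow> moran_expectation V E r f S - f S \<ge> \<mu>"
    using \<open>finite A\<close> strict by (auto simp: \<mu>_def A_def)
  define q where "q = max (1/2) (1 - \<mu>)"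
  have q: "0 \<le> q" "q < 1" "1 - q \<le> \<mu>" using \<mu>(1) by (auto simp: q_def)
  have drift: "moran_expectation V E r f S \<ge> f S + (1 - q)"
    if "S \<subseteq> V" "S \<noteq> {}" "f S > 0" for S
  proof -
    have "S \<in> A" using that by (simp add: A_def)
    then show ?thesis using \<mu>(2) q(3) by fastforce
  qed
  have ext_ge: "ext_within V E r t S0 \<ge> f S0 - q ^ t" for t
    using q by (intro ext_within_ge_geometric[OF f_le_1 drift _ _ S0]) auto
  show ?thesis
  proof (rule ccontr)
    assume "\<not> ?thesis"
    then obtain t where "q ^ t < f S0 - extinction_prob V E r S0"
      using real_arch_pow_inv[of "f S0 - extinction_prob V E r S0" q] q by auto
    then show False using ext_ge[of t] ext_within_le_extinction_prob[OF S0, of t] by linarith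
  qed
qed

end

section \<open>Product potentials and their drift\<close>

definition prod_potential :: "('v \<Rightarrow> real) \<Rightarrow> 'v set \<Rightarrow> real" where
  "prod_potential c S = (\<Prod>x\<in>S. 1 / (1 + c x))"

lemma prod_potential_le_pair:
  assumes "finite S" "a \<in> S" "b \<in> S" "a \<noteq> b" "\<forall>x\<in>S. c x \<ge> 0"
  shows "prod_potential c S \<le> 1 / (1 + c a) * (1 / (1 + c b))"
proof -
  have "prod_potential c S \<le> (\<Prod>x\<in>{a,b}. 1 / (1 + c x))"
    unfolding prod_potential_def using assms by (intro prod_le_prod_subset) auto
  then show ?thesis using assms(4) by simp
qed

context moran_graph
begin

lemma prod_potential_pos: "S \<subseteq> V \<Longrightarrow> \<forall>x\<in>V. c x \<ge> 0 \<Longrightarrow> prod_potential c S > 0"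
  unfolding prod_potential_def by (intro prod_pos) (auto simp: add_pos_nonneg)

lemma prod_potential_le_1: "S \<subseteq> V \<Longrightarrow> \<forall>x\<in>V. c x \<ge> 0 \<Longrightarrow> prod_potential c S \<le> 1"
  unfolding prod_potential_def by (intro prod_le_1) (auto simp: add_pos_nonneg)

definition drift_term :: "('v \<Rightarrow> real) \<Rightarrow> 'v set \<Rightarrow> 'v \<Rightarrow> 'v \<Rightarrow> real" where
  "drift_term c S v w =
     (if v \<in> S \<and> w \<notin> S then r * (1 / (1 + c w) - 1)
      else if v \<notin> S \<and> w \<in> S then c w else 0)"

definition potential_drift :: "('v \<Rightarrow> real) \<Rightarrow> 'v set \<Rightarrow> real" where
  "potential_drift c S =
     (\<Sum>v\<in>V. (\<Sum>w\<in>out_nbrs E v. drift_term c S v w) / real (card (out_nbrs E v)))"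

lemma fitness_mult_prod_potential_step:
  assumes S: "S \<subseteq> V" and c: "\<forall>x\<in>V. c x \<ge> 0" and w: "w \<in> V"
  shows "fitness r S v * prod_potential c (moran_step S v w)
       = fitness r S v * prod_potential c S + prod_potential c S * drift_term c S v w"
proof -
  have finS: "finite S" using S finite_V finite_subset by blast
  consider "v \<in> S" "w \<notin> S" | "v \<notin> S" "w \<in> S" | "v \<in> S \<longleftrightarrow> w \<in> S" by blast
  then show ?thesis
  proof cases
    case 1
    then have "prod_potential c (insert w S) = prod_potential c S / (1 + c w)"
      using finS by (simp add: prod_potential_def)
    then show ?thesis using 1 by (simp add: moran_step_def fitness_def drift_term_def algebra_simps)
  next
    case 2
    have "1 + c w \<noteq> 0" using c w by (smt (verit))
    then have "prod_potential c (S - {w}) = prod_potential c S * (1 + c w)"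
      using finS 2 by (simp add: prod_potential_def prod_diff1)
    then show ?thesis using 2 by (simp add: moran_step_def fitness_def drift_term_def algebra_simps)
  next
    case 3
    then show ?thesis by (auto simp: moran_step_def fitness_def drift_term_def insert_absorb)
  qed
qed

lemma moran_expectation_prod_potential:
  assumes S: "S \<subseteq> V" "S \<noteq> {}" and c: "\<forall>x\<in>V. c x \<ge> 0"
    and out_ne: "\<forall>v\<in>V. out_nbrs E v \<noteq> {}"
  shows "moran_expectation V E r (prod_potential c) S
       = prod_potential c S + prod_potential c S / total_fitness V r S * potential_drift c S"
proof -
  let ?g = "prod_potential c" and ?W = "total_fitness V r S"
  have each: "fitness r S v / ?W * ((\<Sum>w\<in>out_nbrs E v. ?g (moran_step S v w)) / real (card (out_nbrs E v)))
      = fitness r S v / ?W * ?g S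
        + ?g S / ?W * ((\<Sum>w\<in>out_nbrs E v. drift_term c S v w) / real (card (out_nbrs E v)))"
    if v: "v \<in> V" for v
  proof -
    let ?O = "out_nbrs E v"
    have d: "real (card ?O) > 0" using out_ne v finite_out_nbrs card_gt_0_iff by auto
    have "fitness r S v * (\<Sum>w\<in>?O. ?g (moran_step S v w))
        = (\<Sum>w\<in>?O. fitness r S v * ?g S + ?g S * drift_term c S v w)"
      unfolding sum_distrib_left using fitness_mult_prod_potential_step[OF S(1) c] out_nbrs_subset
      by (intro sum.cong) auto
    also have "\<dots> = real (card ?O) * (fitness r S v * ?g S) + ?g S * (\<Sum>w\<in>?O. drift_term c S v w)"
      by (simp add: sum.distrib sum_distrib_left)
    finally show ?thesis using d total_fitness_pos[OF S] by (simp add: field_simps)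
  qed
  have "moran_expectation V E r ?g S
      = (\<Sum>v\<in>V. fitness r S v / ?W) * ?g S + ?g S / ?W * potential_drift c S"
    unfolding moran_expectation_def potential_drift_def using out_ne each
    by (simp add: sum.distrib sum_distrib_left sum_distrib_right)
  then show ?thesis using sum_selection_prob[OF S] by simp
qed

lemma extinction_prob_ge_prod_potential:
  assumes c: "\<forall>x\<in>V. c x \<ge> 0" and out_ne: "\<forall>v\<in>V. out_nbrs E v \<noteq> {}" and \<eta>: "\<eta> \<ge> 0"
    and drift_pos: "\<And>S. S \<subseteq> V \<Longrightarrow> S \<noteq> {} \<Longrightarrow> prod_potential c S > \<eta> \<Longrightarrow> potential_drift c S > 0"
    and S0: "S0 \<subseteq> V"
  shows "extinction_prob V E r S0 \<ge> prod_potential c S0 - \<eta>"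
proof (rule extinction_prob_ge_subharmonic[OF _ _ S0])
  show "prod_potential c S - \<eta> \<le> 1" if "S \<subseteq> V" for S
    using prod_potential_le_1[OF that c] \<eta> by linarith
next
  fix S assume S: "S \<subseteq> V" "S \<noteq> {}" and pos: "prod_potential c S - \<eta> > 0"
  have "prod_potential c S / total_fitness V r S * potential_drift c S > 0"
    using drift_pos[OF S] pos prod_potential_pos[OF S(1) c] total_fitness_pos[OF S] by simp
  then show "moran_expectation V E r (\<lambda>T. prod_potential c T - \<eta>) S > prod_potential c S - \<eta>"
    using moran_expectation_add_const[OF S, of "prod_potential c" "- \<eta>"]
      moran_expectation_prod_potential[OF S c out_ne] by simp
qed

definition in_weight :: "'v \<Rightarrow> real" where
  "in_weight w = (\<Sum>v\<in>V. if w \<in> out_nbrs E v then 1 / real (card (out_nbrs E v)) else 0)"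

definition out_discount :: "('v \<Rightarrow> real) \<Rightarrow> 'v \<Rightarrow> real" where
  "out_discount c v = (\<Sum>w\<in>out_nbrs E v. 1 - 1 / (1 + c w)) / real (card (out_nbrs E v))"

definition mutant_edge_excess :: "('v \<Rightarrow> real) \<Rightarrow> 'v set \<Rightarrow> 'v \<Rightarrow> 'v \<Rightarrow> real" where
  "mutant_edge_excess c S v w =
     (if v \<in> S \<and> w \<in> S then max 0 (c w - r * (1 - 1 / (1 + c w))) else 0)"

definition mutant_edge_loss :: "('v \<Rightarrow> real) \<Rightarrow> 'v set \<Rightarrow> real" where
  "mutant_edge_loss c S =
     (\<Sum>v\<in>V. (\<Sum>w\<in>out_nbrs E v. mutant_edge_excess c S v w) / real (card (out_nbrs E v)))"

lemma sum_out_nbrs_eq_in_weight: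
  "(\<Sum>v\<in>V. (\<Sum>w\<in>out_nbrs E v. h w) / real (card (out_nbrs E v))) = (\<Sum>w\<in>V. h w * in_weight w)"
proof -
  have "(\<Sum>w\<in>out_nbrs E v. h w) / real (card (out_nbrs E v))
      = (\<Sum>w\<in>V. if w \<in> out_nbrs E v then h w / real (card (out_nbrs E v)) else 0)" for v
    using sum.inter_restrict[OF finite_V, of "\<lambda>w. h w / real (card (out_nbrs E v))" "out_nbrs E v"]
      out_nbrs_subset[of v]
    by (simp add: sum_divide_distrib Int_absorb1)
  then have "(\<Sum>v\<in>V. (\<Sum>w\<in>out_nbrs E v. h w) / real (card (out_nbrs E v)))
      = (\<Sum>v\<in>V. \<Sum>w\<in>V. if w \<in> out_nbrs E v then h w / real (card (out_nbrs E v)) else 0)"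
    by simp
  also have "\<dots> = (\<Sum>w\<in>V. \<Sum>v\<in>V. if w \<in> out_nbrs E v then h w / real (card (out_nbrs E v)) else 0)"
    by (rule sum.swap)
  also have "\<dots> = (\<Sum>w\<in>V. h w * in_weight w)"
    unfolding in_weight_def sum_distrib_left by (intro sum.cong refl) auto
  finally show ?thesis .
qed

text \<open>Edge (v,w) is credited c w when w \<in> S and debited r (1 - 1 / (1 + c w)) when v \<in> S.
  This matches drift_term except on edges inside S, whose true contribution is 0.\<close>
lemma potential_drift_ge:
  assumes S: "S \<subseteq> V"
  shows "(\<Sum>w\<in>S. c w * in_weight w - r * out_discount c w) - mutant_edge_loss c S
           \<le> potential_drift c S"
proof -
  let ?d = "\<lambda>v. real (card (out_nbrs E v))"
  let ?gain = "\<lambda>w. if w \<in> S then c w else 0"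
  let ?cost = "\<lambda>v w. if v \<in> S then r * (1 - 1 / (1 + c w)) else 0"
  have restrict: "(\<Sum>x\<in>S. g x) = (\<Sum>x\<in>V. if x \<in> S then g x else 0)" for g :: "'v \<Rightarrow> real"
    using sum.inter_restrict[OF finite_V, of g S] S by (simp add: Int_absorb1)
  have gain: "(\<Sum>w\<in>S. c w * in_weight w) = (\<Sum>w\<in>V. ?gain w * in_weight w)"
    unfolding restrict by (intro sum.cong) auto
  have cost: "(\<Sum>w\<in>out_nbrs E v. ?cost v w) / ?d v = (if v \<in> S then r * out_discount c v else 0)"
    for v unfolding out_discount_def by (simp add: sum_distrib_left[symmetric])
  have edge: "?gain w - ?cost v w - mutant_edge_excess c S v w \<le> drift_term c S v w" for v w
    unfolding drift_term_def mutant_edge_excess_def by (auto simp: algebra_simps)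
  have "(\<Sum>w\<in>S. c w * in_weight w - r * out_discount c w) - mutant_edge_loss c S
      = (\<Sum>w\<in>V. ?gain w * in_weight w) - (\<Sum>v\<in>V. if v \<in> S then r * out_discount c v else 0)
        - mutant_edge_loss c S"
    by (simp only: sum_subtractf gain restrict[of "\<lambda>v. r * out_discount c v"])
  also have "\<dots> = (\<Sum>v\<in>V. (\<Sum>w\<in>out_nbrs E v. ?gain w - ?cost v w - mutant_edge_excess c S v w) / ?d v)"
    unfolding sum_out_nbrs_eq_in_weight[symmetric] mutant_edge_loss_def cost[symmetric]
    by (simp only: sum_subtractf diff_divide_distrib)
  also have "\<dots> \<le> potential_drift c S"
    unfolding potential_drift_def by (intro sum_mono divide_right_mono edge) simp
  finally show ?thesis .
qed

end

section \<open>Metafunnels\<close>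

locale metafunnel_params =
  fixes k l m :: nat
  assumes k_pos: "k > 0" and l_pos: "l > 0" and m_pos: "m > 0"
begin

abbreviation "MV \<equiv> metafunnel_V k l m"
abbreviation "ME \<equiv> metafunnel_E k l m"

lemma mem_MV:
  "(i,j,x) \<in> MV \<longleftrightarrow> (i = 0 \<and> j = 0 \<and> x = 0) \<or> (1 \<le> i \<and> i \<le> k \<and> 1 \<le> j \<and> j \<le> l \<and> x < m ^ i)"
  by (auto simp: metafunnel_V_def)

lemma mem_MV_iff:
  "v \<in> MV \<longleftrightarrow> v = (0,0,0) \<or>
     (1 \<le> fst v \<and> fst v \<le> k \<and> 1 \<le> fst (snd v) \<and> fst (snd v) \<le> l \<and> snd (snd v) < m ^ fst v)"
  by (cases v) (auto simp: mem_MV)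

lemma MV_cases:
  assumes "v \<in> MV"
  obtains "v = (0,0,0)"
    | "1 \<le> fst v" "fst v \<le> k" "1 \<le> fst (snd v)" "fst (snd v) \<le> l" "snd (snd v) < m ^ fst v"
  using assms mem_MV_iff by blast

lemma apex_in_MV: "(0,0,0) \<in> MV"
  by (simp add: mem_MV)

lemma fst_le_k: "v \<in> MV \<Longrightarrow> fst v \<le> k"
  by (auto elim: MV_cases)

lemma finite_MV: "finite MV"
proof -
  have "m ^ i \<le> m ^ k" if "i \<le> k" for i
    using m_pos that by (simp add: power_increasing)
  then have "MV \<subseteq> {0..k} \<times> {0..l} \<times> {..<m^k}"
    using m_pos by (fastforce simp: mem_MV_iff)
  then show ?thesis by (rule finite_subset) auto
qed

lemma mem_ME:
  "((i,j,x),(i',j',x')) \<in> ME \<longleftrightarrow> (i,j,x) \<in> MV \<and> (i',j',x') \<in> MV \<and>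
     ((i = 0 \<and> i' = k) \<or> (i = 1 \<and> i' = 0) \<or> (i = i' + 1 \<and> 1 \<le> i' \<and> j = j'))"
  using k_pos by (auto simp: metafunnel_E_def mem_MV)

lemma ME_subset: "ME \<subseteq> MV \<times> MV"
  using k_pos apex_in_MV by (auto simp: metafunnel_E_def mem_MV)

sublocale moran: moran_graph MV ME 2
  using finite_MV ME_subset by unfold_locales auto

definition next_layer :: "nat \<Rightarrow> nat" where
  "next_layer i = (if i = 0 then k else i - 1)"

lemma out_nbrs_MV:
  assumes "v \<in> MV"
  shows "out_nbrs ME v = {w \<in> MV.
           if fst v = 0 then fst w = k
           else if fst v = 1 then fst w = 0
           else fst w = fst v - 1 \<and> fst (snd w) = fst (snd v)}"
proof (intro set_eqI)
  fix w :: "nat \<times> nat \<times> nat"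
  obtain i j x i' j' x' where "v = (i,j,x)" "w = (i',j',x')" by (cases v, cases w)
  then show "w \<in> out_nbrs ME v \<longleftrightarrow> w \<in> {w \<in> MV.
           if fst v = 0 then fst w = k
           else if fst v = 1 then fst w = 0
           else fst w = fst v - 1 \<and> fst (snd w) = fst (snd v)}"
    using assms by (simp add: out_nbrs_def mem_ME) (auto simp: mem_MV)
qed

lemma card_layer:
  assumes "1 \<le> i" "i \<le> k"
  shows "card {w \<in> MV. fst w = i} = l * m ^ i"
proof -
  have "{w \<in> MV. fst w = i} = (\<lambda>(j,x). (i,j,x)) ` ({1..l} \<times> {..<m^i})"
    using assms by (auto simp: mem_MV_iff image_iff)
  moreover have "inj_on (\<lambda>(j,x). (i::nat,j::nat,x::nat)) ({1..l} \<times> {..<m^i})"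
    by (auto simp: inj_on_def)
  ultimately show ?thesis by (simp add: card_image card_cartesian_product)
qed

lemma card_block:
  assumes "1 \<le> i" "i \<le> k" "1 \<le> j" "j \<le> l"
  shows "card {w \<in> MV. fst w = i \<and> fst (snd w) = j} = m ^ i"
proof -
  have "{w \<in> MV. fst w = i \<and> fst (snd w) = j} = (\<lambda>x. (i,j,x)) ` {..<m^i}"
    using assms by (auto simp: mem_MV_iff image_iff)
  then show ?thesis by (simp add: card_image inj_on_def)
qed

lemma layer_0: "{w \<in> MV. fst w = 0} = {(0,0,0)}"
  by (auto simp: mem_MV_iff)

lemma card_out_nbrs:
  assumes v: "v \<in> MV"
  shows "card (out_nbrs ME v) = (if fst v = 0 then l * m ^ k else m ^ (fst v - 1))"
proof (cases rule: MV_cases[OF v])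
  case 1
  then show ?thesis using out_nbrs_MV[OF v] card_layer[of k] k_pos by simp
next
  case 2
  show ?thesis
  proof (cases "fst v = 1")
    case True
    then show ?thesis using out_nbrs_MV[OF v] layer_0 by simp
  next
    case False
    then show ?thesis using out_nbrs_MV[OF v] card_block[of "fst v - 1" "fst (snd v)"] 2 by simp
  qed
qed

lemma out_nbrs_nonempty: "v \<in> MV \<Longrightarrow> out_nbrs ME v \<noteq> {}"
  using card_out_nbrs l_pos m_pos by (metis card.empty nat_0_less_mult_iff zero_less_power
      less_irrefl)

lemma fst_out_nbr: "v \<in> MV \<Longrightarrow> w \<in> out_nbrs ME v \<Longrightarrow> fst w = next_layer (fst v)"
  by (auto simp: out_nbrs_MV next_layer_def split: if_splits)

lemma not_self_out_nbr:
  assumes "v \<in> MV"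
  shows "v \<notin> out_nbrs ME v"
proof
  assume "v \<in> out_nbrs ME v"
  then have "fst v = next_layer (fst v)" using fst_out_nbr[OF assms] by blast
  then show False using k_pos by (simp add: next_layer_def split: if_splits)
qed

lemma in_nbrs_MV:
  assumes w: "w \<in> MV"
  shows "{v \<in> MV. w \<in> out_nbrs ME v} =
     (if fst w = 0 then {v \<in> MV. fst v = 1}
      else if fst w < k then {v \<in> MV. fst v = fst w + 1 \<and> fst (snd v) = fst (snd w)}
      else {(0,0,0)})"
proof (intro set_eqI)
  fix v :: "nat \<times> nat \<times> nat"
  obtain i j x i' j' x' where "v = (i,j,x)" "w = (i',j',x')" by (cases v, cases w)
  then show "v \<in> {v \<in> MV. w \<in> out_nbrs ME v} \<longleftrightarrow> v \<in> (if fst w = 0 then {v \<in> MV. fst v = 1}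
      else if fst w < k then {v \<in> MV. fst v = fst w + 1 \<and> fst (snd v) = fst (snd w)}
      else {(0,0,0)})"
    using w k_pos by (simp add: out_nbrs_def mem_ME) (auto simp: mem_MV)
qed

lemma in_weight_MV:
  assumes w: "w \<in> MV"
  shows "moran.in_weight w =
    (if fst w = 0 then real l * real m else if fst w < k then real m else 1 / (real l * real m ^ k))"
proof -
  have K: "moran.in_weight w = (\<Sum>v\<in>{v \<in> MV. w \<in> out_nbrs ME v}. 1 / real (card (out_nbrs ME v)))"
    unfolding moran.in_weight_def by (rule sum.inter_filter[OF finite_MV, symmetric])
  consider "fst w = 0" | "0 < fst w" "fst w < k" | "fst w = k" "fst w \<noteq> 0"
    using fst_le_k[OF w] by linarith
  then show ?thesis
  proof cases
    case 1
    then have "moran.in_weight w = (\<Sum>v\<in>{v \<in> MV. fst v = 1}. 1)"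
      using K in_nbrs_MV[OF w] by (simp add: card_out_nbrs)
    then show ?thesis using 1 card_layer[of 1] k_pos by simp
  next
    case 2
    have j: "1 \<le> fst (snd w)" "fst (snd w) \<le> l" using 2 w by (auto elim: MV_cases)
    have "moran.in_weight w
        = (\<Sum>v\<in>{v \<in> MV. fst v = fst w + 1 \<and> fst (snd v) = fst (snd w)}. 1 / real m ^ fst w)"
      using K in_nbrs_MV[OF w] 2 by (simp add: card_out_nbrs)
    also have "\<dots> = real m ^ (fst w + 1) / real m ^ fst w"
      using card_block[of "fst w + 1" "fst (snd w)"] 2 j by simp
    finally show ?thesis using 2 m_pos by simp
  next
    case 3
    then show ?thesis using K in_nbrs_MV[OF w] k_pos card_out_nbrs[OF apex_in_MV] by simp
  qed
qed

lemma out_discount_layer_weights: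
  assumes v: "v \<in> MV"
  shows "moran.out_discount (\<lambda>w. c (fst w)) v = 1 - 1 / (1 + c (next_layer (fst v)))"
proof -
  have "moran.out_discount (\<lambda>w. c (fst w)) v
      = (\<Sum>w\<in>out_nbrs ME v. 1 - 1 / (1 + c (next_layer (fst v)))) / real (card (out_nbrs ME v))"
    unfolding moran.out_discount_def using fst_out_nbr[OF v] by simp
  then show ?thesis using out_nbrs_nonempty[OF v] moran.finite_out_nbrs by simp
qed

lemma real_l_mult_m_ge_1: "1 \<le> real l * real m"
  using l_pos m_pos by (metis One_nat_def Suc_leI of_nat_1 of_nat_mono of_nat_mult nat_0_less_mult_iff)

section \<open>Mutants starting below the top layer\<close>

definition lower_start_weight :: "nat \<Rightarrow> real" where
  "lower_start_weight i = (if i = k then 15 else 3)"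

text \<open>A potential above 1/16 forces S to be a single vertex x outside the top layer V_k. Its
  credit 3 * in_weight x \<ge> 3 beats the debit 2 * out_discount x < 2.\<close>
lemma potential_drift_lower_start_pos:
  assumes S: "S \<subseteq> MV" "S \<noteq> {}"
    and pot: "prod_potential (\<lambda>w. lower_start_weight (fst w)) S > 1/16"
  shows "moran.potential_drift (\<lambda>w. lower_start_weight (fst w)) S > 0"
proof -
  let ?c = "\<lambda>w. lower_start_weight (fst w)"
  obtain x where x: "x \<in> S" using S by blast
  have S_eq: "S = {x}"
  proof (rule ccontr)
    assume "S \<noteq> {x}"
    then obtain y where y: "y \<in> S" "y \<noteq> x" using x by blast
    have "finite S" using S(1) finite_MV finite_subset by blast
    then have "prod_potential ?c S \<le> 1 / (1 + ?c y) * (1 / (1 + ?c x))"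
      using x y by (intro prod_potential_le_pair) (auto simp: lower_start_weight_def)
    also have "\<dots> \<le> 1/4 * (1/4)"
      by (intro mult_mono) (auto simp: lower_start_weight_def)
    finally show False using pot by simp
  qed
  have xV: "x \<in> MV" and xk: "fst x \<noteq> k"
    using S x pot by (auto simp: S_eq prod_potential_def lower_start_weight_def)
  have "moran.mutant_edge_loss ?c S = 0"
    unfolding moran.mutant_edge_loss_def moran.mutant_edge_excess_def
    using not_self_out_nbr S_eq by (intro sum.neutral ballI) (auto intro!: sum.neutral)
  moreover have "moran.in_weight x \<ge> 1"
    using in_weight_MV[OF xV] xk real_l_mult_m_ge_1 m_pos fst_le_k[OF xV] by (auto simp: Suc_le_eq)
  moreover have "moran.out_discount ?c x \<le> 1"
    using out_discount_layer_weights[OF xV, of lower_start_weight]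
    by (simp add: lower_start_weight_def)
  ultimately show ?thesis
    using moran.potential_drift_ge[OF S(1), of ?c] xk
    by (simp add: S_eq lower_start_weight_def)
qed

lemma extinction_prob_lower_start:
  assumes "v \<in> MV" "fst v \<noteq> k"
  shows "extinction_prob MV ME 2 {v} \<ge> 3/16"
proof -
  have "extinction_prob MV ME 2 {v} \<ge> prod_potential (\<lambda>w. lower_start_weight (fst w)) {v} - 1/16"
  proof (rule moran.extinction_prob_ge_prod_potential)
    show "\<forall>x\<in>MV. 0 \<le> lower_start_weight (fst x)" by (simp add: lower_start_weight_def)
    show "\<forall>v\<in>MV. out_nbrs ME v \<noteq> {}" using out_nbrs_nonempty by blast
  qed (use assms(1) potential_drift_lower_start_pos in simp_all)
  then show ?thesis using assms by (simp add: prod_potential_def lower_start_weight_def)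
qed

section \<open>Mutants starting in the top layer\<close>

text \<open>On layer i < k the weight is 4^(i+1) / |V_(i+1)|, so a mutant in V_i (i \<ge> 1) is
  credited 4^(i+1) / |V_i|, twice its largest debit. The weight 4^(k+1) on V_k keeps two
  top-layer mutants below the threshold potential.\<close>
definition top_start_weight :: "nat \<Rightarrow> real" where
  "top_start_weight i = (if i = k then 4 ^ (k+1) else 4 ^ (i+1) / (real l * real m ^ (i+1)))"

lemma top_start_weight_nonneg: "top_start_weight i \<ge> 0"
  by (simp add: top_start_weight_def)

definition top_start_slack :: "nat \<times> nat \<times> nat \<Rightarrow> real" where
  "top_start_slack v = top_start_weight (fst v) * moran.in_weight v
     - 2 * (1 - 1 / (1 + top_start_weight (next_layer (fst v))))"

lemma top_start_slack_apex: "top_start_slack (0,0,0) > 2"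
proof -
  have "top_start_weight 0 * moran.in_weight (0,0,0) = 4"
    using in_weight_MV[OF apex_in_MV] k_pos l_pos m_pos by (simp add: top_start_weight_def)
  moreover have "1 / (1 + top_start_weight (next_layer 0)) > 0"
    using top_start_weight_nonneg[of "next_layer 0"] by simp
  ultimately show ?thesis unfolding top_start_slack_def by simp
qed

lemma top_start_slack_pos:
  assumes v: "v \<in> MV"
  shows "top_start_slack v > 0"
proof (cases rule: MV_cases[OF v])
  case 1
  then show ?thesis using top_start_slack_apex by simp
next
  case 2
  define i where "i = fst v"
  have i: "1 \<le> i" "i \<le> k" using 2 by (auto simp: i_def)
  have lm: "real l * real m ^ i > 0" using l_pos m_pos by simp
  have gain: "top_start_weight i * moran.in_weight v = 4 ^ (i+1) / (real l * real m ^ i)"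
    using in_weight_MV[OF v] i m_pos k_pos by (auto simp: top_start_weight_def i_def[symmetric])
  have discount: "1 - 1 / (1 + top_start_weight (next_layer i)) \<le> 4 ^ i / (real l * real m ^ i)"
  proof -
    have "1 - 1 / (1 + top_start_weight (next_layer i)) \<le> top_start_weight (next_layer i)"
      using top_start_weight_nonneg[of "next_layer i"] by (simp add: field_simps)
    moreover have "next_layer i = i - 1" "i - 1 \<noteq> k" "i - 1 + 1 = i"
      using i by (auto simp: next_layer_def)
    ultimately show ?thesis by (simp add: top_start_weight_def)
  qed
  have "2 * 4 ^ i / (real l * real m ^ i)
      = 4 ^ (i+1) / (real l * real m ^ i) - 2 * (4 ^ i / (real l * real m ^ i))"
    by (simp add: field_simps)
  also have "\<dots> \<le> top_start_slack v"
    unfolding top_start_slack_def i_def[symmetric] gain using discount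
    by (intro diff_left_mono mult_left_mono) auto
  finally show ?thesis using lm by (smt (verit) divide_pos_pos zero_less_power)
qed

lemma prod_potential_top_start_unique:
  assumes S: "S \<subseteq> MV"
    and pot: "prod_potential (\<lambda>w. top_start_weight (fst w)) S > 1 / (1 + 4 ^ (k+1)) / 2"
    and ab: "a \<in> S" "b \<in> S" "fst a = k" "fst b = k"
  shows "a = b"
proof (rule ccontr)
  let ?q = "1 / (1 + 4 ^ (k+1)) :: real"
  assume "a \<noteq> b"
  moreover have "finite S" using S finite_MV finite_subset by blast
  ultimately have "prod_potential (\<lambda>w. top_start_weight (fst w)) S
      \<le> 1 / (1 + top_start_weight (fst a)) * (1 / (1 + top_start_weight (fst b)))"
    using ab top_start_weight_nonneg by (intro prod_potential_le_pair) auto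
  also have "\<dots> = ?q * ?q" using ab by (simp add: top_start_weight_def)
  also have "\<dots> \<le> ?q * (1/2)"
    using one_le_power[of "4::real" "k+1"] by (intro mult_left_mono) (auto simp: field_simps)
  finally show False using pot by simp
qed

context
  assumes layers_large: "\<forall>i<k. (4::real) ^ (i+1) \<le> real l * real m ^ (i+1)"
    and top_layer_large: "(4::real) ^ (k+1) \<le> 2 * real l * real m ^ k"
begin

lemma top_start_weight_le_1: "i < k \<Longrightarrow> top_start_weight i \<le> 1"
  using layers_large l_pos m_pos by (simp add: top_start_weight_def divide_le_eq)

lemma mutant_edge_excess_top_start_le:
  assumes "S \<subseteq> MV"
  shows "moran.mutant_edge_excess (\<lambda>w. top_start_weight (fst w)) S v w
       \<le> (if v \<in> S \<and> w \<in> S \<and> fst w = k then 4 ^ (k+1) else 0)"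
proof (cases "v \<in> S \<and> w \<in> S")
  case True
  let ?c = "top_start_weight (fst w)"
  have "?c - 2 * (1 - 1 / (1 + ?c)) \<le> (if fst w = k then 4 ^ (k+1) else 0)"
  proof (cases "fst w = k")
    case True
    have "1 / (1 + ?c) \<le> 1" using top_start_weight_nonneg[of "fst w"] by simp
    then show ?thesis using True by (simp add: top_start_weight_def)
  next
    case False
    moreover have "fst w \<le> k" using fst_le_k assms True by blast
    ultimately have c: "0 \<le> ?c" "?c \<le> 1"
      using top_start_weight_nonneg top_start_weight_le_1 by simp_all
    have "?c - 2 * (1 - 1 / (1 + ?c)) = ?c * (?c - 1) / (1 + ?c)"
      using c by (simp add: field_simps)
    also have "\<dots> \<le> 0" using c by (intro divide_nonpos_pos mult_nonneg_nonpos) auto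
    finally show ?thesis using False by simp
  qed
  then show ?thesis using True by (simp add: moran.mutant_edge_excess_def)
qed (auto simp: moran.mutant_edge_excess_def)

lemma sum_mutant_edge_excess_top_start_le:
  assumes S: "S \<subseteq> MV" and v: "v \<in> MV"
    and unique: "\<And>a b. a \<in> S \<Longrightarrow> b \<in> S \<Longrightarrow> fst a = k \<Longrightarrow> fst b = k \<Longrightarrow> a = b"
  shows "(\<Sum>w\<in>out_nbrs ME v. moran.mutant_edge_excess (\<lambda>w. top_start_weight (fst w)) S v w)
       \<le> (if v = (0,0,0) then (if (0,0,0) \<in> S then 4 ^ (k+1) else 0) else 0)"
proof -
  let ?T = "{w \<in> out_nbrs ME v. v \<in> S \<and> w \<in> S \<and> fst w = k}"
  have "(\<Sum>w\<in>out_nbrs ME v. moran.mutant_edge_excess (\<lambda>w. top_start_weight (fst w)) S v w)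
      \<le> (\<Sum>w\<in>out_nbrs ME v. if v \<in> S \<and> w \<in> S \<and> fst w = k then 4 ^ (k+1) else 0)"
    by (intro sum_mono mutant_edge_excess_top_start_le[OF S])
  also have "\<dots> = 4 ^ (k+1) * real (card ?T)"
    using moran.finite_out_nbrs by (simp add: sum.If_cases Int_def conj_commute)
  also have "\<dots> \<le> (if v = (0,0,0) then (if (0,0,0) \<in> S then 4 ^ (k+1) else 0) else 0)"
  proof (cases "v = (0,0,0)")
    case True
    show ?thesis
    proof (cases "v \<in> S")
      case True
      have "\<forall>a\<in>?T. \<forall>b\<in>?T. a = b" using unique by blast
      then have "real (card ?T) \<le> 1"
        using card_le_Suc0_iff_eq[of ?T] moran.finite_out_nbrs by simp
      then show ?thesis using \<open>v = (0,0,0)\<close> True by simp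
    qed (use True in simp)
  next
    case False
    then have "fst v \<noteq> 0" using v by (auto elim: MV_cases)
    then have "fst w \<noteq> k" if "w \<in> out_nbrs ME v" for w
      using fst_out_nbr[OF v that] fst_le_k[OF v] by (simp add: next_layer_def)
    then have T: "?T = {}" by blast
    show ?thesis using False by (simp add: T)
  qed
  finally show ?thesis .
qed

lemma mutant_edge_loss_top_start_le:
  assumes S: "S \<subseteq> MV"
    and unique: "\<And>a b. a \<in> S \<Longrightarrow> b \<in> S \<Longrightarrow> fst a = k \<Longrightarrow> fst b = k \<Longrightarrow> a = b"
  shows "moran.mutant_edge_loss (\<lambda>w. top_start_weight (fst w)) S \<le> (if (0,0,0) \<in> S then 2 else 0)"
proof -
  let ?B = "if (0,0,0) \<in> S then 4 ^ (k+1) else 0 :: real"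
  have "moran.mutant_edge_loss (\<lambda>w. top_start_weight (fst w)) S
      \<le> (\<Sum>v\<in>MV. (if v = (0,0,0) then ?B else 0) / real (card (out_nbrs ME v)))"
    unfolding moran.mutant_edge_loss_def
    by (intro sum_mono divide_right_mono sum_mutant_edge_excess_top_start_le[OF S _ unique]) simp_all
  also have "\<dots> = (\<Sum>v\<in>MV. if v = (0,0,0) then ?B / real (card (out_nbrs ME v)) else 0)"
    by (intro sum.cong) auto
  also have "\<dots> = (if (0,0,0) \<in> S then 4 ^ (k+1) / (real l * real m ^ k) else 0)"
    using apex_in_MV card_out_nbrs[OF apex_in_MV] by (simp add: sum.delta[OF finite_MV])
  also have "\<dots> \<le> (if (0,0,0) \<in> S then 2 else 0)"
    using top_layer_large l_pos m_pos by (simp add: divide_le_eq mult.assoc)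
  finally show ?thesis .
qed

lemma potential_drift_top_start_pos:
  assumes S: "S \<subseteq> MV" "S \<noteq> {}"
    and pot: "prod_potential (\<lambda>w. top_start_weight (fst w)) S > 1 / (1 + 4 ^ (k+1)) / 2"
  shows "moran.potential_drift (\<lambda>w. top_start_weight (fst w)) S > 0"
proof -
  let ?c = "\<lambda>w. top_start_weight (fst w)"
  have finS: "finite S" using S finite_MV finite_subset by blast
  have loss: "moran.mutant_edge_loss ?c S \<le> (if (0,0,0) \<in> S then 2 else 0)"
    using prod_potential_top_start_unique[OF S(1) pot]
    by (intro mutant_edge_loss_top_start_le[OF S(1)]) blast
  have "(\<Sum>w\<in>S. ?c w * moran.in_weight w - 2 * moran.out_discount ?c w) = (\<Sum>w\<in>S. top_start_slack w)"
    using S(1) by (intro sum.cong refl) (auto simp: top_start_slack_def out_discount_layer_weights)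
  moreover have slack_pos: "\<forall>w\<in>S. top_start_slack w > 0" using top_start_slack_pos S(1) by auto
  moreover have "(\<Sum>w\<in>S. top_start_slack w) > (if (0,0,0) \<in> S then 2 else 0)"
  proof (cases "(0,0,0) \<in> S")
    case True
    then have "top_start_slack (0,0,0) \<le> (\<Sum>w\<in>S. top_start_slack w)"
      using slack_pos finS by (intro member_le_sum) auto
    then show ?thesis using top_start_slack_apex True by simp
  qed (use slack_pos finS S(2) in \<open>simp add: sum_pos\<close>)
  ultimately show ?thesis using moran.potential_drift_ge[OF S(1), of ?c] loss by simp
qed

lemma extinction_prob_top_start:
  assumes "v \<in> MV" "fst v = k"
  shows "extinction_prob MV ME 2 {v} \<ge> 1 / (1 + 4 ^ (k+1)) / 2"
proof -
  have "extinction_prob MV ME 2 {v}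
      \<ge> prod_potential (\<lambda>w. top_start_weight (fst w)) {v} - 1 / (1 + 4 ^ (k+1)) / 2"
  proof (rule moran.extinction_prob_ge_prod_potential)
    show "\<forall>x\<in>MV. 0 \<le> top_start_weight (fst x)" using top_start_weight_nonneg by blast
    show "\<forall>v\<in>MV. out_nbrs ME v \<noteq> {}" using out_nbrs_nonempty by blast
  qed (use assms(1) potential_drift_top_start_pos in simp_all)
  moreover have "prod_potential (\<lambda>w. top_start_weight (fst w)) {v} = 1 / (1 + 4 ^ (k+1))"
    using assms by (simp add: prod_potential_def top_start_weight_def)
  ultimately show ?thesis by (metis field_sum_of_halves add_diff_cancel_right')
qed

end

end

section \<open>Averaging over the initial mutant\<close>

lemma pow_add_less_pow:
  fixes m :: nat
  assumes "2 \<le> m" "i < i'" "x < m ^ i"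
  shows "m ^ i + x < m ^ i'"
proof -
  have "m ^ i + x < 2 * m ^ i" using assms by simp
  also have "\<dots> \<le> m * m ^ i" using assms by simp
  also have "\<dots> = m ^ Suc i" by simp
  also have "\<dots> \<le> m ^ i'" using assms by (intro power_increasing) auto
  finally show ?thesis .
qed

lemma pow_add_eq_pow_add_iff:
  fixes m :: nat
  assumes "2 \<le> m" "x < m ^ i" "x' < m ^ i'"
  shows "m ^ i + x = m ^ i' + x' \<longleftrightarrow> i = i' \<and> x = x'"
  using pow_add_less_pow[OF assms(1) _ assms(2), of i'] pow_add_less_pow[OF assms(1) _ assms(3), of i]
  by (cases i i' rule: linorder_cases) auto

lemma mean_ge_of_fraction:
  fixes S n t q c :: real
  assumes "0 < t" "0 < n" "n \<le> c * t" "t * q \<le> S" "0 \<le> q"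
  shows "q / c \<le> S / n"
proof -
  have c: "0 < c" using assms zero_less_mult_pos2[of c t] by linarith
  have "q / c = t * q / (c * t)" using assms(1) by simp
  also have "\<dots> \<le> t * q / n" using assms by (intro divide_left_mono) auto
  also have "\<dots> \<le> S / n" using assms by (intro divide_right_mono) auto
  finally show ?thesis .
qed

context metafunnel_params
begin

abbreviation "top_layer \<equiv> {w \<in> MV. fst w = k}"
abbreviation "below_top \<equiv> {w \<in> MV. fst w \<noteq> k}"

lemma card_MV_split: "card MV = card top_layer + card below_top"
proof -
  have "MV = top_layer \<union> below_top" by auto
  then show ?thesis using finite_MV card_Un_disjoint[of top_layer below_top] by auto
qed

lemma card_top_layer: "card top_layer = l * m ^ k"
  using card_layer[of k] k_pos by simp

lemma card_below_top_ge:
  assumes "2 \<le> k"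
  shows "l * m ^ (k - 1) \<le> card below_top"
proof -
  have "card {w \<in> MV. fst w = k - 1} \<le> card below_top"
    using assms finite_MV by (intro card_mono) auto
  then show ?thesis using card_layer[of "k - 1"] assms by simp
qed

lemma below_top_k_1:
  assumes "k = 1"
  shows "below_top = {(0,0,0)}"
proof (intro set_eqI iffI)
  fix w assume "w \<in> below_top"
  then have "w \<in> MV" "fst w \<noteq> k" by auto
  then show "w \<in> {(0,0,0)}" using assms by (cases rule: MV_cases) auto
qed (use apex_in_MV assms in auto)

lemma card_below_top_le_top:
  assumes m2: "2 \<le> m"
  shows "card below_top \<le> card top_layer"
proof -
  define f where
    "f v = (if fst v = 0 then (k, 1, 0) else (k, fst (snd v), m ^ fst v + snd (snd v)))"
    for v :: "nat \<times> nat \<times> nat"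
  have "inj_on f below_top"
  proof (rule inj_onI)
    fix a b assume ab: "a \<in> below_top" "b \<in> below_top" "f a = f b"
    obtain i j x i' j' x' where a: "a = (i,j,x)" and b: "b = (i',j',x')" by (cases a, cases b)
    have "0 < m ^ i'" "0 < m ^ i" using m_pos by simp_all
    then show "a = b" using ab pow_add_eq_pow_add_iff[OF m2] unfolding a b
      by (auto simp: f_def mem_MV split: if_splits)
  qed
  moreover have "f ` below_top \<subseteq> top_layer"
  proof
    fix w assume "w \<in> f ` below_top"
    then obtain i j x where "(i,j,x) \<in> MV" "i \<noteq> k" "w = f (i,j,x)" by auto
    then show "w \<in> top_layer"
      using pow_add_less_pow[OF m2] k_pos l_pos m_pos by (auto simp: f_def mem_MV)
  qed
  ultimately show ?thesis using card_inj_on_le finite_MV by fastforce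
qed

lemma card_MV_ge: "k \<le> card MV" "l \<le> card MV" "m \<le> card MV"
proof -
  have top: "card top_layer \<le> card MV" using card_MV_split by simp
  have "m \<le> m ^ k" "l \<le> l * m ^ k" "m ^ k \<le> l * m ^ k"
    using m_pos k_pos l_pos by (simp_all add: self_le_power)
  then show "l \<le> card MV" "m \<le> card MV" using top card_top_layer by linarith+
  have "(\<lambda>i. (i,1,0)) ` {1..k} \<subseteq> MV" using l_pos m_pos by (auto simp: mem_MV)
  moreover have "card ((\<lambda>i. (i::nat,1::nat,0::nat)) ` {1..k}) = k" by (simp add: card_image inj_on_def)
  ultimately show "k \<le> card MV" using finite_MV card_mono by metis
qed

lemma sum_extinction_prob_ge:
  assumes "A \<subseteq> MV" "\<And>v. v \<in> A \<Longrightarrow> b \<le> extinction_prob MV ME 2 {v}"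
  shows "real (card A) * b \<le> (\<Sum>v\<in>MV. extinction_prob MV ME 2 {v})"
proof -
  have "real (card A) * b \<le> (\<Sum>v\<in>A. extinction_prob MV ME 2 {v})"
    using sum_mono[of A "\<lambda>_. b"] assms(2) by simp
  also have "\<dots> \<le> (\<Sum>v\<in>MV. extinction_prob MV ME 2 {v})"
    using assms(1) finite_MV moran.extinction_prob_nonneg by (intro sum_mono2) auto
  finally show ?thesis .
qed

lemma real_pow_le_l_mult: "real m ^ j \<le> real l * real m ^ j"
  using l_pos by (simp add: mult_le_cancel_right1)

lemma card_MV_k_1: "k = 1 \<Longrightarrow> card MV = l * m + 1"
  using card_MV_split card_top_layer below_top_k_1 by simp

lemma layers_large_if_top_heavy:
  assumes "k = 1 \<or> 4 \<le> m" "9 \<le> card MV"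
  shows "\<forall>i<k. (4::real) ^ (i+1) \<le> real l * real m ^ (i+1)"
proof (cases "k = 1")
  case True
  then have "4 \<le> l * m" using assms(2) card_MV_k_1 by simp
  then show ?thesis using True by (simp flip: of_nat_mult)
next
  case False
  then have "(4::real) ^ (i+1) \<le> real m ^ (i+1)" for i using assms(1) by (intro power_mono) auto
  then show ?thesis using real_pow_le_l_mult order_trans by blast
qed

lemma top_layer_large_if_top_heavy:
  assumes "k = 1 \<or> 8 \<le> m" "9 \<le> card MV"
  shows "(4::real) ^ (k+1) \<le> 2 * real l * real m ^ k"
proof (cases "k = 1")
  case True
  then have "8 \<le> l * m" using assms(2) card_MV_k_1 by simp
  then show ?thesis using True by (simp flip: of_nat_mult)
next
  case False
  have "(2::real) ^ 1 \<le> 2 ^ k" using k_pos by (intro power_increasing) auto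
  then have "(4::real) ^ (k+1) \<le> 2 * (2 ^ k * 4 ^ k)" by simp
  also have "\<dots> = 2 * 8 ^ k" by (simp flip: power_mult_distrib)
  also have "\<dots> \<le> 2 * real m ^ k" using False assms(1) by (simp add: power_mono)
  also have "\<dots> \<le> 2 * real l * real m ^ k" using real_pow_le_l_mult[of k] by simp
  finally show ?thesis .
qed

lemma card_MV_le_twice_top:
  assumes "k = 1 \<or> 2 \<le> m"
  shows "card MV \<le> 2 * card top_layer"
proof (cases "k = 1")
  case True
  then show ?thesis using card_MV_split below_top_k_1 card_top_layer l_pos m_pos by simp
next
  case False
  then show ?thesis using assms card_MV_split card_below_top_le_top by simp
qed

lemma avg_extinction_prob_top_heavy:
  assumes top_heavy: "k = 1 \<or> 8 \<le> m" and "9 \<le> card MV"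
  shows "1 / (1 + 4 ^ (k+1)) / 2 / 2 \<le> avg_extinction_prob MV ME 2"
  unfolding avg_extinction_prob_def
proof (rule mean_ge_of_fraction)
  show "0 < real (card top_layer)" using card_top_layer l_pos m_pos by simp
  have "card MV \<le> 2 * card top_layer"
    using top_heavy by (intro card_MV_le_twice_top) auto
  then show "real (card MV) \<le> 2 * real (card top_layer)" by (simp flip: of_nat_mult)
  show "real (card top_layer) * (1 / (1 + 4 ^ (k+1)) / 2)
      \<le> (\<Sum>v\<in>MV. extinction_prob MV ME 2 {v})"
    using extinction_prob_top_start[OF layers_large_if_top_heavy top_layer_large_if_top_heavy]
      assms by (intro sum_extinction_prob_ge) auto
qed (use assms(2) in auto)

lemma card_MV_le_below_top:
  assumes "2 \<le> k" "m \<le> M"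
  shows "card MV \<le> (M + 1) * card below_top"
proof -
  obtain k' where k': "k = Suc k'" using assms(1) by (cases k) auto
  have "card top_layer = m * (l * m ^ k')" using card_top_layer k' by (simp add: ac_simps)
  also have "\<dots> \<le> M * card below_top"
    using assms card_below_top_ge k' by (intro mult_mono) auto
  finally show ?thesis using card_MV_split by simp
qed

lemma avg_extinction_prob_lower_heavy:
  assumes "2 \<le> k" "m \<le> M"
  shows "3 / 16 / (real M + 1) \<le> avg_extinction_prob MV ME 2"
  unfolding avg_extinction_prob_def
proof (rule mean_ge_of_fraction)
  have "0 < l * m ^ (k - 1)" using l_pos m_pos by simp
  then show "0 < real (card below_top)" using card_below_top_ge[OF assms(1)] by linarith
  have "real (card MV) \<le> real ((M + 1) * card below_top)"
    using card_MV_le_below_top[OF assms] by (simp only: of_nat_le_iff)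
  then show "real (card MV) \<le> (real M + 1) * real (card below_top)" by (simp add: algebra_simps)
  show "real (card below_top) * (3/16) \<le> (\<Sum>v\<in>MV. extinction_prob MV ME 2 {v})"
    using extinction_prob_lower_start by (intro sum_extinction_prob_ge) auto
  show "0 < real (card MV)" using apex_in_MV finite_MV by (auto simp: card_gt_0_iff)
qed simp

end

lemma le_powr_if_powr_inverse_le:
  fixes X y a :: real
  assumes "0 < a" "0 < X" "X powr (1 / a) \<le> y"
  shows "X \<le> y powr a"
proof -
  have "X = (X powr (1 / a)) powr a" using assms by (simp add: powr_powr)
  also have "\<dots> \<le> y powr a" using assms by (intro powr_mono2) auto
  finally show ?thesis .
qed

lemma inverse_square_lt_top_heavy_bound:
  fixes P :: real
  assumes "20 < P" "4 ^ k \<le> P"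
  shows "1 / (P * P) < 1 / (1 + 4 ^ (k+1)) / 2 / 2"
proof -
  have "4 * (1 + 4 ^ (k+1)) \<le> 4 + 16 * P" using assms(2) by simp
  also have "\<dots> < P * P"
    using assms(1) mult_strict_right_mono[of 20 P P] by linarith
  finally have "4 * (1 + 4 ^ (k+1)) < P * P" .
  moreover have "0 < P * P" using assms(1) by simp
  ultimately have "1 / (P * P) < 1 / (4 * (1 + 4 ^ (k+1)))"
    by (intro divide_strict_left_mono) (auto intro!: mult_pos_pos add_pos_nonneg)
  then show ?thesis by (simp add: divide_divide_eq_left mult_ac)
qed

lemma inverse_square_lt_lower_heavy_bound:
  fixes P M :: real
  assumes "0 \<le> M" "16 * (M + 1) < P"
  shows "1 / (P * P) < 3 / 16 / (M + 1)"
proof -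
  have "16 * (M + 1) < P * P" using assms by (smt (verit) mult_less_cancel_left1)
  then have "1 / (P * P) < 1 / (16 * (M + 1))"
    using assms(1) by (intro divide_strict_left_mono) auto
  also have "\<dots> \<le> 3 / 16 / (M + 1)" using assms(1) by (simp add: field_simps)
  finally show ?thesis .
qed

context metafunnel_params
begin

lemma four_pow_le_card_powr:
  assumes "0 < \<delta>" "4 \<le> real M powr (\<delta>/2)" "M \<le> m"
  shows "4 ^ k \<le> real (card MV) powr (\<delta>/2)"
proof -
  have M_pos: "0 < M" using assms(2) by (cases "M = 0") auto
  have "real M ^ k \<le> real m ^ k" using assms(3) by (simp add: power_mono)
  also have "\<dots> \<le> real (card top_layer)" using card_top_layer real_pow_le_l_mult by simp
  also have "\<dots> \<le> real (card MV)" using card_MV_split by simp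
  finally have Mk: "real M ^ k \<le> real (card MV)" .
  have "(4::real) ^ k \<le> (real M powr (\<delta>/2)) ^ k" using assms(2) by (intro power_mono) auto
  also have "\<dots> = (real M ^ k) powr (\<delta>/2)"
    using M_pos by (simp add: powr_power powr_realpow[symmetric] powr_powr mult.commute)
  also have "\<dots> \<le> real (card MV) powr (\<delta>/2)" using Mk assms(1) by (intro powr_mono2) auto
  finally show ?thesis .
qed

lemma avg_extinction_prob_gt_powr:
  assumes \<delta>: "0 < \<delta>" and M: "8 \<le> M" "4 \<le> real M powr (\<delta>/2)"
    and n: "20 + 16 * (real M + 1) < real (card MV) powr (\<delta>/2)" "9 \<le> card MV"
  shows "real (card MV) powr (-\<delta>) < avg_extinction_prob MV ME 2"
proof -
  define P where "P = real (card MV) powr (\<delta>/2)"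
  have "real (card MV) powr (-\<delta>) = 1 / (P * P)"
    unfolding P_def by (simp add: powr_minus_divide flip: powr_add)
  moreover have P: "20 < P" "16 * (real M + 1) < P" using n(1) by (auto simp: P_def)
  moreover consider "k = 1 \<or> M \<le> m" | "2 \<le> k" "m \<le> M" using k_pos by linarith
  then have "1 / (P * P) < avg_extinction_prob MV ME 2"
  proof cases
    case 1
    then have "4 ^ k \<le> P" using P four_pow_le_card_powr[OF \<delta> M(2)] by (auto simp: P_def)
    moreover have "k = 1 \<or> 8 \<le> m" using 1 M(1) by linarith
    ultimately show ?thesis
      using inverse_square_lt_top_heavy_bound[OF P(1)] avg_extinction_prob_top_heavy[OF _ n(2)]
      by (blast intro: less_le_trans)
  next
    case 2
    show ?thesis
      using inverse_square_lt_lower_heavy_bound[OF _ P(2)] avg_extinction_prob_lower_heavy[OF 2]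
      by (blast intro: less_le_trans of_nat_0_le_iff)
  qed
  ultimately show ?thesis by simp
qed

end

lemma metafunnel_avg_extinction_prob_eventually_gt:
  fixes \<delta> :: real
  assumes \<delta>: "0 < \<delta>"
  shows "\<exists>N. \<forall>k l m. 0 < k \<longrightarrow> 0 < l \<longrightarrow> 0 < m \<longrightarrow> N \<le> card (metafunnel_V k l m) \<longrightarrow>
           real (card (metafunnel_V k l m)) powr (- \<delta>)
             < avg_extinction_prob (metafunnel_V k l m) (metafunnel_E k l m) 2"
proof -
  define M :: nat where "M = max 8 (nat \<lceil>4 powr (2/\<delta>)\<rceil>)"
  define X :: real where "X = 21 + 16 * (real M + 1)"
  have "4 powr (2/\<delta>) \<le> real M" unfolding M_def by linarith
  then have M: "8 \<le> M" "4 \<le> real M powr (\<delta>/2)"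
    using \<delta> by (auto simp: M_def intro: le_powr_if_powr_inverse_le)
  show ?thesis
  proof (intro exI allI impI)
    fix k l m :: nat
    assume pos: "0 < k" "0 < l" "0 < m"
      and N: "max 9 (nat \<lceil>X powr (2/\<delta>)\<rceil>) \<le> card (metafunnel_V k l m)"
    interpret metafunnel_params k l m using pos by unfold_locales
    have "X powr (2/\<delta>) \<le> real (card MV)" using N by linarith
    then have "X \<le> real (card MV) powr (\<delta>/2)"
      using \<delta> by (intro le_powr_if_powr_inverse_le) (auto simp: X_def)
    then show "real (card MV) powr (- \<delta>) < avg_extinction_prob MV ME 2"
      using avg_extinction_prob_gt_powr[OF \<delta> M] N by (simp add: X_def)
  qed
qed

lemma finite_metafunnels_card_less:
  "finite {metafunnel k l m | k l m. 0 < k \<and> 0 < l \<and> 0 < m \<and> card (metafunnel_V k l m) < N}"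
proof (rule finite_subset)
  show "{metafunnel k l m | k l m. 0 < k \<and> 0 < l \<and> 0 < m \<and> card (metafunnel_V k l m) < N}
      \<subseteq> (\<lambda>(k, l, m). metafunnel k l m) ` ({..N} \<times> {..N} \<times> {..N})"
  proof (intro subsetI)
    fix G assume "G \<in> {metafunnel k l m | k l m.
        0 < k \<and> 0 < l \<and> 0 < m \<and> card (metafunnel_V k l m) < N}"
    then obtain k l m where G: "G = metafunnel k l m" and pos: "0 < k" "0 < l" "0 < m"
      and small: "card (metafunnel_V k l m) < N" by blast
    interpret metafunnel_params k l m using pos by unfold_locales
    show "G \<in> (\<lambda>(k, l, m). metafunnel k l m) ` ({..N} \<times> {..N} \<times> {..N})"
      unfolding G using small card_MV_ge by (intro image_eqI[where x="(k,l,m)"]) auto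
  qed
qed simp

lemma infinite_metafunnel_family_has_large_member:
  assumes "infinite \<Upsilon>" "\<forall>G\<in>\<Upsilon>. \<exists>k l m. k > 0 \<and> l > 0 \<and> m > 0 \<and> G = metafunnel k l m"
  obtains k l m where "metafunnel k l m \<in> \<Upsilon>" "0 < k" "0 < l" "0 < m"
    "N \<le> card (metafunnel_V k l m)"
proof -
  have "\<not> \<Upsilon> \<subseteq> {metafunnel k l m | k l m.
      0 < k \<and> 0 < l \<and> 0 < m \<and> card (metafunnel_V k l m) < N}"
    using assms(1) finite_metafunnels_card_less finite_subset by blast
  then obtain G where G: "G \<in> \<Upsilon>" "G \<notin> {metafunnel k l m | k l m.
      0 < k \<and> 0 < l \<and> 0 < m \<and> card (metafunnel_V k l m) < N}" by blast
  obtain k l m where pos: "0 < k" "0 < l" "0 < m" and G_eq: "G = metafunnel k l m"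
    using assms(2) G(1) by blast
  moreover have "N \<le> card (metafunnel_V k l m)" using G(2) pos unfolding G_eq by (auto simp: not_less)
  ultimately show ?thesis using that G(1) by blast
qed

theorem theorem1p9:
  fixes \<delta> :: real
  assumes "\<delta> > 0"
  shows "\<not> (\<exists>\<Upsilon>. infinite \<Upsilon> \<and>
            (\<forall>G\<in>\<Upsilon>. \<exists>k l m. k > 0 \<and> l > 0 \<and> m > 0 \<and> G = metafunnel k l m) \<and>
            up_to_fixating (\<lambda>r n. real n powr (- \<delta>)) \<Upsilon>)"
proof clarify
  fix \<Upsilon> :: "((nat \<times> nat \<times> nat) set \<times> ((nat \<times> nat \<times> nat) \<times> nat \<times> nat \<times> nat) set) set"
  assume inf: "infinite \<Upsilon>"
    and mf: "\<forall>G\<in>\<Upsilon>. \<exists>k l m. k > 0 \<and> l > 0 \<and> m > 0 \<and> G = metafunnel k l m"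
    and fixating: "up_to_fixating (\<lambda>r n. real n powr (- \<delta>)) \<Upsilon>"
  obtain N where N: "\<forall>k l m. 0 < k \<longrightarrow> 0 < l \<longrightarrow> 0 < m \<longrightarrow> N \<le> card (metafunnel_V k l m) \<longrightarrow>
      real (card (metafunnel_V k l m)) powr (- \<delta>)
        < avg_extinction_prob (metafunnel_V k l m) (metafunnel_E k l m) 2"
    using metafunnel_avg_extinction_prob_eventually_gt[OF assms] by blast
  obtain n0 where n0: "\<forall>G\<in>\<Upsilon>. n0 \<le> card (fst G) \<longrightarrow>
      avg_extinction_prob (fst G) (snd G) 2 \<le> real (card (fst G)) powr (- \<delta>)"
    using fixating unfolding up_to_fixating_def by (metis one_less_numeral_iff semiring_norm(76))
  obtain k l m where G: "metafunnel k l m \<in> \<Upsilon>" and pos: "0 < k" "0 < l" "0 < m"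
    and big: "max N n0 \<le> card (metafunnel_V k l m)"
    using infinite_metafunnel_family_has_large_member[OF inf mf] by blast
  have "avg_extinction_prob (metafunnel_V k l m) (metafunnel_E k l m) 2
      \<le> real (card (metafunnel_V k l m)) powr (- \<delta>)"
    using bspec[OF n0 G] big by (simp add: metafunnel_def)
  then show False using N[rule_format, OF pos] big by fastforce
qed

end
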